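(* Let $B>0$ and let $(X_s,Y_s)_{s\ge1}$ be any sequence with $X_s\in\mathbb R^p$, $\|X_s\|_2\le1$, $Y_s\in\mathbb R$. Let $\ell_s(\theta)=\tfrac12(\langle\theta,X_s\rangle-Y_s)^2$ and $\mathcal L_s(Q)=-\log\int_{\mathbb R^p}e^{-\ell_s(\theta)}\,\mathrm dQ(\theta)$ for a probability measure $Q$. Consider the exponentially weighted average (EWA) forecaster with prior $Q_1$ equal to the uniform distribution on $\mathcal B(B+1)$, i.e. $\mathrm dQ_s(\theta)\propto\exp(-\sum_{r=1}^{s-1}\ell_r(\theta))\,\mathrm dQ_1(\theta)$ for $s\ge1$. Then for all $\bar\theta\in\mathcal B(B)$ and all $t\ge1$, $$\sum_{s=1}^t\mathcal L_s(Q_s)-\sum_{s=1}^t\ell_s(\bar\theta)\le\frac p2\log\frac{(B+1)^2e\max(p,t)}{p}.$$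
   Context: $\langle\cdot,\cdot\rangle$ is the Euclidean inner product on $\mathbb R^p$ and $\mathcal B(r)$ the closed centred Euclidean ball of radius $r$ in $\mathbb R^p$. *)

theory Defs
  imports "HOL-Probability.Probability"
begin

definition sq_loss :: "(nat \<Rightarrow> 'a::euclidean_space) \<Rightarrow> (nat \<Rightarrow> real) \<Rightarrow> nat \<Rightarrow> 'a \<Rightarrow> real" where
  "sq_loss X Y s \<theta> = (1/2) * (\<theta> \<bullet> X s - Y s)^2"

definition mix_loss :: "'a measure \<Rightarrow> ('a \<Rightarrow> real) \<Rightarrow> real" where
  "mix_loss Q f = - ln (\<integral>\<theta>. exp (- f \<theta>) \<partial>Q)"

definition unif_ball :: "real \<Rightarrow> 'a::euclidean_space measure" where
  "unif_ball r = uniform_measure lborel (cball 0 r)"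

definition ewa :: "'a::euclidean_space measure \<Rightarrow> (nat \<Rightarrow> 'a \<Rightarrow> real) \<Rightarrow> nat \<Rightarrow> 'a measure" where
  "ewa Q1 l s = density Q1 (\<lambda>\<theta>. ennreal (exp (- (\<Sum>r\<in>{1..<s}. l r \<theta>))
        / (\<integral>\<eta>. exp (- (\<Sum>r\<in>{1..<s}. l r \<eta>)) \<partial>Q1)))"

end

theory Submission
  imports Defs
begin

text \<open>
  The cumulative mixture loss of EWA telescopes: it equals \<open>-ln \<integral> exp (-L\<^sub>t) dQ\<^sub>1\<close>, where
  \<open>L\<^sub>t\<close> is the cumulative square loss. To bound the integral from below, restrict it to the
  ball of radius \<open>\<epsilon>\<close> around \<open>\<theta>bar\<close>, which lies inside the support of \<open>Q\<^sub>1\<close> and has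
  \<open>Q\<^sub>1\<close>-mass \<open>(\<epsilon>/(B+1))\<^sup>p\<close>. Pairing \<open>\<theta>bar + u\<close> with \<open>\<theta>bar - u\<close>, the linear terms of
  the quadratic loss cancel, so \<open>L\<^sub>t\<close> averages to at most \<open>L\<^sub>t(\<theta>bar) + t\<epsilon>\<^sup>2/2\<close> over
  the pair (as \<open>\<parallel>X\<^sub>s\<parallel> \<le> 1\<close>), and by convexity of \<open>exp\<close> the integrand averages to at
  least \<open>exp (-L\<^sub>t(\<theta>bar) - t\<epsilon>\<^sup>2/2)\<close> on the ball. The radius \<open>\<epsilon>\<^sup>2 = p / max p t\<close>
  balances this curvature cost against the volume cost \<open>p ln ((B+1)/\<epsilon>)\<close>.
\<close>

lemma exp_midpoint_le:
  fixes a b :: real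
  shows "exp ((a + b) / 2) \<le> (exp a + exp b) / 2"
proof -
  have "exp ((a + b) / 2) = exp (a / 2) * exp (b / 2)"
    by (simp add: add_divide_distrib exp_add)
  moreover have "exp a = exp (a / 2)^2" "exp b = exp (b / 2)^2"
    by (simp_all add: power2_eq_square flip: exp_add)
  moreover have "0 \<le> (exp (a / 2) - exp (b / 2))^2" by simp
  ultimately show ?thesis by (simp add: power2_eq_square algebra_simps)
qed

lemma lborel_integral_reflect:
  fixes h :: "'a::euclidean_space \<Rightarrow> 'b::{banach, second_countable_topology}"
  assumes [measurable]: "h \<in> borel_measurable borel"
  shows "(\<integral>x. h x \<partial>lborel) = (\<integral>x. h (t - x) \<partial>lborel)"
proof -
  have "(lborel::'a measure) = distr lborel borel (\<lambda>x. t - x)"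
    using lborel_affine[of "-1" t] by (simp add: density_1)
  then have "(\<integral>x. h x \<partial>lborel) = (\<integral>x. h x \<partial>distr lborel borel (\<lambda>x. t - x))"
    by simp
  also have "\<dots> = (\<integral>x. h (t - x) \<partial>lborel)"
    by (rule integral_distr) auto
  finally show ?thesis .
qed

lemma cball_integral_ge_reflection_mean:
  fixes g :: "'a::euclidean_space \<Rightarrow> real"
  assumes g: "continuous_on (cball a e) g"
    and c: "\<And>x. x \<in> cball a e \<Longrightarrow> c \<le> (g x + g (2 *\<^sub>R a - x)) / 2"
  shows "c * measure lborel (cball a e) \<le> (\<integral>x. indicator (cball a e) x * g x \<partial>lborel)"
proof -
  define A where "A = cball a e"
  define \<rho> where "\<rho> x = 2 *\<^sub>R a - x" for x :: 'a
  have \<rho>_A: "\<rho> x \<in> A \<longleftrightarrow> x \<in> A" for x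
    by (simp add: A_def \<rho>_def dist_norm scaleR_2 algebra_simps norm_minus_commute)
  have g\<rho>: "continuous_on A (g \<circ> \<rho>)"
  proof (rule continuous_on_compose)
    show "continuous_on A \<rho>" unfolding \<rho>_def by (intro continuous_intros)
    have "\<rho> ` A \<subseteq> A" using \<rho>_A by auto
    then show "continuous_on (\<rho> ` A) g" using g continuous_on_subset unfolding A_def by blast
  qed
  have int_g: "integrable lborel (\<lambda>x. indicator A x * g x)"
    using borel_integrable_compact[of A g] g by (simp add: A_def)
  have int_g\<rho>: "integrable lborel (\<lambda>x. indicator A x * g (\<rho> x))"
    using borel_integrable_compact[OF _ g\<rho>] by (simp add: A_def)
  have int_c: "integrable lborel (\<lambda>x. indicator A x * c)"
    using borel_integrable_compact[of A "\<lambda>_. c"] by (simp add: A_def)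
  have "(\<integral>x. indicator A x * g x \<partial>lborel) = (\<integral>x. indicator A (\<rho> x) * g (\<rho> x) \<partial>lborel)"
    unfolding \<rho>_def by (rule lborel_integral_reflect) (use int_g in measurable)
  also have "\<dots> = (\<integral>x. indicator A x * g (\<rho> x) \<partial>lborel)"
    by (simp add: indicator_def \<rho>_A)
  finally have reflect: "(\<integral>x. indicator A x * g x \<partial>lborel) = (\<integral>x. indicator A x * g (\<rho> x) \<partial>lborel)" .
  have "c * measure lborel A = (\<integral>x. indicator A x * c \<partial>lborel)"
    by (simp add: A_def)
  also have "\<dots> \<le> (\<integral>x. (indicator A x * g x + indicator A x * g (\<rho> x)) / 2 \<partial>lborel)"
    using int_c int_g int_g\<rho> c
    by (intro integral_mono) (auto simp: A_def \<rho>_def indicator_def)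
  also have "\<dots> = (\<integral>x. indicator A x * g x \<partial>lborel)"
    using int_g int_g\<rho> reflect by simp
  finally show ?thesis unfolding A_def .
qed

lemma sets_unif_ball [measurable_cong]: "sets (unif_ball R) = sets borel"
  by (simp add: unif_ball_def)

lemma measure_cball_pos:
  "0 < r \<Longrightarrow> 0 < measure lborel (cball (a::'a::euclidean_space) r)"
  by (simp add: content_cball unit_ball_vol_pos)

lemma emeasure_cball_eq_measure:
  "0 \<le> r \<Longrightarrow> emeasure lborel (cball (a::'a::euclidean_space) r) = ennreal (measure lborel (cball a r))"
  by (simp add: emeasure_cball content_cball)

lemma prob_space_unif_ball: "0 < R \<Longrightarrow> prob_space (unif_ball R :: 'a::euclidean_space measure)"
  unfolding unif_ball_def
proof (intro prob_space_uniform_measure)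
  assume "0 < R"
  then show "emeasure lborel (cball (0::'a) R) \<noteq> 0"
    using measure_cball_pos[of R "0::'a"] by (simp add: emeasure_cball_eq_measure)
qed (simp add: emeasure_cball_eq_measure)

lemma integral_unif_ball:
  fixes g :: "'a::euclidean_space \<Rightarrow> real"
  assumes R: "0 < R" and [measurable]: "g \<in> borel_measurable borel"
  shows "(\<integral>x. g x \<partial>unif_ball R)
           = (\<integral>x. indicator (cball 0 R) x * g x \<partial>lborel) / measure lborel (cball (0::'a) R)"
proof -
  define m where "m = measure lborel (cball (0::'a) R)"
  have [measurable]: "cball (0::'a) R \<in> sets borel" by simp
  have m: "0 < m" "emeasure lborel (cball (0::'a) R) = ennreal m"
    using R by (simp_all add: m_def measure_cball_pos emeasure_cball_eq_measure)
  have "unif_ball R = density lborel (\<lambda>x. ennreal (indicator (cball (0::'a) R) x / m))"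
    unfolding unif_ball_def uniform_measure_def m(2)
    by (intro arg_cong[where f="density lborel"] ext)
       (simp add: divide_ennreal[OF _ m(1)] flip: ennreal_indicator)
  then have "(\<integral>x. g x \<partial>unif_ball R) = (\<integral>x. (indicator (cball 0 R) x / m) *\<^sub>R g x \<partial>lborel)"
    using m(1) by (simp only:) (rule integral_density, auto)
  also have "\<dots> = (\<integral>x. indicator (cball 0 R) x * g x \<partial>lborel) / m"
    by (simp flip: integral_divide_zero)
  finally show ?thesis unfolding m_def .
qed

lemma unif_ball_integral_ge:
  fixes g :: "'a::euclidean_space \<Rightarrow> real"
  assumes e: "0 < e" and a: "norm a + e \<le> R"
    and g: "continuous_on UNIV g" "\<And>x. 0 \<le> g x"
    and c: "\<And>u. norm u \<le> e \<Longrightarrow> c \<le> (g (a + u) + g (a - u)) / 2"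
  shows "c * (e / R) ^ DIM('a) \<le> (\<integral>x. g x \<partial>unif_ball R)"
proof -
  have R: "0 < R" using e a norm_ge_zero[of a] by linarith
  have [measurable]: "g \<in> borel_measurable borel"
    using g(1) by (rule borel_measurable_continuous_onI)
  have sub: "cball a e \<subseteq> cball 0 R"
  proof
    fix x assume "x \<in> cball a e"
    then show "x \<in> cball 0 R"
      using a norm_triangle_sub[of x a] by (simp add: dist_norm norm_minus_commute)
  qed
  have "c \<le> (g x + g (2 *\<^sub>R a - x)) / 2" if "x \<in> cball a e" for x
    using c[of "x - a"] that by (simp add: dist_norm norm_minus_commute scaleR_2 algebra_simps)
  then have "c * measure lborel (cball a e) \<le> (\<integral>x. indicator (cball a e) x * g x \<partial>lborel)"
    using g(1) continuous_on_subset by (blast intro: cball_integral_ge_reflection_mean)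
  also have "\<dots> \<le> (\<integral>x. indicator (cball 0 R) x * g x \<partial>lborel)"
    using sub g continuous_on_subset[OF g(1)]
      borel_integrable_compact[of "cball a e" g] borel_integrable_compact[of "cball 0 R" g]
    by (intro integral_mono) (auto simp: indicator_def)
  finally have "c * measure lborel (cball a e) / measure lborel (cball (0::'a) R) \<le> (\<integral>x. g x \<partial>unif_ball R)"
    using R by (simp add: integral_unif_ball measure_cball_pos divide_right_mono)
  moreover have "measure lborel (cball a e) / measure lborel (cball (0::'a) R) = (e / R) ^ DIM('a)"
  proof -
    have "unit_ball_vol (real DIM('a)) \<noteq> 0"
      using unit_ball_vol_pos[of "real DIM('a)"] by linarith
    then show ?thesis using e R by (simp add: content_cball power_divide)
  qed
  ultimately show ?thesis by (metis times_divide_eq_right)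
qed

lemma (in prob_space) integral_exp_uminus_pos:
  fixes f :: "'a \<Rightarrow> real"
  assumes [measurable]: "f \<in> borel_measurable M" and f: "\<And>x. x \<in> space M \<Longrightarrow> 0 \<le> f x"
  shows "0 < (\<integral>x. exp (- f x) \<partial>M)"
proof -
  have int: "integrable M (\<lambda>x. exp (- f x))"
    using f by (intro integrable_const_bound[where B=1]) auto
  have "\<not> (AE x in M. exp (- f x) = 0)"
    using AE_False prob_space by simp
  then have "(\<integral>x. exp (- f x) \<partial>M) \<noteq> 0"
    using integral_nonneg_eq_0_iff_AE[OF int] by simp
  moreover have "0 \<le> (\<integral>x. exp (- f x) \<partial>M)" by simp
  ultimately show ?thesis by linarith
qed

lemma mix_loss_ewa:
  fixes Q :: "'a::euclidean_space measure" and l :: "nat \<Rightarrow> 'a \<Rightarrow> real"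
  defines "Z \<equiv> \<lambda>s. \<integral>\<theta>. exp (- (\<Sum>r\<in>{1..<s}. l r \<theta>)) \<partial>Q"
  assumes [measurable]: "\<And>r. l r \<in> borel_measurable Q"
    and s: "1 \<le> s" and Z: "0 < Z s" "0 < Z (Suc s)"
  shows "mix_loss (ewa Q l s) (l s) = ln (Z s) - ln (Z (Suc s))"
proof -
  have "ewa Q l s = density Q (\<lambda>\<theta>. ennreal (exp (- (\<Sum>r\<in>{1..<s}. l r \<theta>)) / Z s))"
    unfolding ewa_def Z_def ..
  then have "(\<integral>\<theta>. exp (- l s \<theta>) \<partial>ewa Q l s)
      = (\<integral>\<theta>. (exp (- (\<Sum>r\<in>{1..<s}. l r \<theta>)) / Z s) *\<^sub>R exp (- l s \<theta>) \<partial>Q)"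
    using Z by (simp only:) (intro integral_density, auto)
  also have "\<dots> = (\<integral>\<theta>. exp (- (\<Sum>r\<in>{1..<Suc s}. l r \<theta>)) / Z s \<partial>Q)"
  proof -
    have "{1..<Suc s} = insert s {1..<s}" using s by auto
    then show ?thesis by (simp add: exp_diff exp_minus field_simps)
  qed
  also have "\<dots> = Z (Suc s) / Z s"
    unfolding Z_def by simp
  finally show ?thesis
    using Z by (simp add: mix_loss_def ln_div)
qed

lemma sum_mix_loss_ewa:
  fixes Q :: "'a::euclidean_space measure" and l :: "nat \<Rightarrow> 'a \<Rightarrow> real"
  assumes Q: "prob_space Q" and [measurable]: "\<And>r. l r \<in> borel_measurable Q"
    and l: "\<And>r \<theta>. \<theta> \<in> space Q \<Longrightarrow> 0 \<le> l r \<theta>"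
  shows "(\<Sum>s=1..t. mix_loss (ewa Q l s) (l s)) = - ln (\<integral>\<theta>. exp (- (\<Sum>r=1..t. l r \<theta>)) \<partial>Q)"
proof (induction t)
  case 0
  then show ?case using prob_space.prob_space[OF Q] by simp
next
  case (Suc t)
  have Z: "0 < (\<integral>\<theta>. exp (- (\<Sum>r\<in>{1..<s}. l r \<theta>)) \<partial>Q)" for s
    using l by (intro prob_space.integral_exp_uminus_pos[OF Q] sum_nonneg) auto
  have "{1..<Suc t} = {1..t}" "{1..<Suc (Suc t)} = {1..Suc t}" by auto
  then show ?case
    using Suc mix_loss_ewa[of l Q "Suc t"] Z[of "Suc t"] Z[of "Suc (Suc t)"] by simp
qed

lemma sq_loss_nonneg: "0 \<le> sq_loss X Y s \<theta>"
  by (simp add: sq_loss_def)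

lemma sq_loss_add_diff:
  "sq_loss X Y r (\<theta> + u) + sq_loss X Y r (\<theta> - u) = 2 * sq_loss X Y r \<theta> + (u \<bullet> X r)^2"
  unfolding sq_loss_def by (simp add: inner_add_left inner_diff_left power2_eq_square algebra_simps)

lemma sum_sq_loss_add_diff_le:
  assumes X: "\<And>r. r \<in> I \<Longrightarrow> norm (X r) \<le> 1"
  shows "(\<Sum>r\<in>I. sq_loss X Y r (\<theta> + u)) + (\<Sum>r\<in>I. sq_loss X Y r (\<theta> - u))
           \<le> 2 * (\<Sum>r\<in>I. sq_loss X Y r \<theta>) + real (card I) * (norm u)^2"
proof -
  have "(u \<bullet> X r)^2 \<le> (norm u)^2" if "r \<in> I" for r
  proof -
    have "\<bar>u \<bullet> X r\<bar> \<le> norm u"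
      using Cauchy_Schwarz_ineq2[of u "X r"] X[OF that] mult_left_le[of "norm (X r)" "norm u"] by simp
    then show ?thesis using abs_le_square_iff by fastforce
  qed
  then have "(\<Sum>r\<in>I. (u \<bullet> X r)^2) \<le> real (card I) * (norm u)^2"
    using sum_bounded_above[of I "\<lambda>r. (u \<bullet> X r)^2"] by simp
  moreover have "(\<Sum>r\<in>I. sq_loss X Y r (\<theta> + u)) + (\<Sum>r\<in>I. sq_loss X Y r (\<theta> - u))
      = 2 * (\<Sum>r\<in>I. sq_loss X Y r \<theta>) + (\<Sum>r\<in>I. (u \<bullet> X r)^2)"
    by (simp add: sq_loss_add_diff sum_distrib_left flip: sum.distrib)
  ultimately show ?thesis by linarith
qed

lemma neg_ln_integral_exp_sum_sq_loss_le:
  fixes \<theta> :: "'a::euclidean_space"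
  assumes e: "0 < e" and \<theta>: "norm \<theta> + e \<le> R" and X: "\<And>r. r \<in> I \<Longrightarrow> norm (X r) \<le> 1"
  shows "- ln (\<integral>x. exp (- (\<Sum>r\<in>I. sq_loss X Y r x)) \<partial>unif_ball R)
           \<le> (\<Sum>r\<in>I. sq_loss X Y r \<theta>) + real (card I) * e^2 / 2 - DIM('a) * ln (e / R)"
proof -
  let ?S = "\<lambda>x. \<Sum>r\<in>I. sq_loss X Y r x"
  let ?c = "exp (- ?S \<theta> - real (card I) * e^2 / 2)"
  have "?c * (e / R) ^ DIM('a) \<le> (\<integral>x. exp (- ?S x) \<partial>unif_ball R)"
  proof (rule unif_ball_integral_ge[OF e \<theta>])
    show "continuous_on UNIV (\<lambda>x. exp (- ?S x))"
      unfolding sq_loss_def by (intro continuous_intros)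
    fix u :: 'a assume "norm u \<le> e"
    then have "real (card I) * (norm u)^2 \<le> real (card I) * e^2"
      by (intro mult_left_mono power_mono) auto
    moreover have "?S (\<theta> + u) + ?S (\<theta> - u) \<le> 2 * ?S \<theta> + real (card I) * (norm u)^2"
      using X by (rule sum_sq_loss_add_diff_le)
    ultimately have "- ?S \<theta> - real (card I) * e^2 / 2 \<le> (- ?S (\<theta> + u) + - ?S (\<theta> - u)) / 2"
      by argo
    then have "?c \<le> exp ((- ?S (\<theta> + u) + - ?S (\<theta> - u)) / 2)"
      by simp
    also have "\<dots> \<le> (exp (- ?S (\<theta> + u)) + exp (- ?S (\<theta> - u))) / 2"
      by (rule exp_midpoint_le)
    finally show "?c \<le> (exp (- ?S (\<theta> + u)) + exp (- ?S (\<theta> - u))) / 2" .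
  qed simp
  moreover have R: "0 < R"
    using e \<theta> norm_ge_zero[of \<theta>] by linarith
  then have "0 < ?c * (e / R) ^ DIM('a)"
    using e by simp
  ultimately have "ln (?c * (e / R) ^ DIM('a)) \<le> ln (\<integral>x. exp (- ?S x) \<partial>unif_ball R)"
    by (subst ln_le_cancel_iff) auto
  then show ?thesis
    using e R by (simp add: ln_mult ln_realpow)
qed

lemma curvature_volume_tradeoff:
  fixes n :: nat and t R :: real
  assumes n: "0 < n" and t: "0 \<le> t" and R: "0 < R"
  defines "e \<equiv> sqrt (n / max n t)"
  shows "t * e^2 / 2 - n * ln (e / R) \<le> n / 2 * ln (R^2 * exp 1 * max n t / n)"
proof -
  define M where "M = max (real n) t"
  have M: "0 < M" "real n \<le> M" "t \<le> M" using n by (auto simp: M_def)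
  have curvature: "t * e^2 / 2 \<le> n / 2"
    using n M by (simp add: e_def M_def[symmetric] field_simps mult_right_mono)
  have volume: "ln (e / R) = (ln n - ln M) / 2 - ln R"
    using n M R by (simp add: e_def M_def[symmetric] ln_div ln_sqrt)
  have "t * e^2 / 2 - n * ln (e / R) \<le> n / 2 * (2 * ln R + 1 + ln M - ln n)"
    unfolding volume using curvature by argo
  also have "2 * ln R + 1 + ln M - ln n = ln (R^2 * exp 1 * M / n)"
    using n M R by (simp add: ln_mult ln_div ln_realpow)
  finally show ?thesis unfolding M_def .
qed

theorem proposition2:
  fixes B :: real and X :: "nat \<Rightarrow> 'a::euclidean_space" and Y :: "nat \<Rightarrow> real"
    and \<theta>bar :: 'a and t :: nat
  assumes "B > 0"
    and "\<And>s. s \<ge> 1 \<Longrightarrow> norm (X s) \<le> 1"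
    and "norm \<theta>bar \<le> B"
    and "t \<ge> 1"
  shows "(\<Sum>s=1..t. mix_loss (ewa (unif_ball (B + 1)) (sq_loss X Y) s) (sq_loss X Y s))
           - (\<Sum>s=1..t. sq_loss X Y s \<theta>bar)
         \<le> real DIM('a) / 2 * ln ((B + 1)^2 * exp 1 * max (real DIM('a)) (real t) / real DIM('a))"
proof -
  define e where "e = sqrt (real DIM('a) / max (real DIM('a)) (real t))"
  have "0 < real DIM('a) / max (real DIM('a)) (real t)" "real DIM('a) / max (real DIM('a)) (real t) \<le> 1"
    by (auto simp: divide_le_eq_1 zero_less_divide_iff less_max_iff_disj)
  then have e: "0 < e" "e \<le> 1"
    by (simp_all add: e_def)
  have "prob_space (unif_ball (B + 1) :: 'a measure)"
    using assms(1) by (intro prob_space_unif_ball) simp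
  moreover have "sq_loss X Y s \<in> borel_measurable (unif_ball (B + 1))" for s
    unfolding sq_loss_def[abs_def] by measurable
  ultimately have "(\<Sum>s=1..t. mix_loss (ewa (unif_ball (B + 1)) (sq_loss X Y) s) (sq_loss X Y s))
      = - ln (\<integral>\<theta>. exp (- (\<Sum>s=1..t. sq_loss X Y s \<theta>)) \<partial>unif_ball (B + 1))"
    by (intro sum_mix_loss_ewa) (simp_all add: sq_loss_nonneg)
  also have "\<dots> \<le> (\<Sum>s=1..t. sq_loss X Y s \<theta>bar) + t * e^2 / 2 - DIM('a) * ln (e / (B + 1))"
    using neg_ln_integral_exp_sum_sq_loss_le[where I="{1..t}" and \<theta>=\<theta>bar] assms(2,3) e by simp
  also have "\<dots> \<le> (\<Sum>s=1..t. sq_loss X Y s \<theta>bar)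
      + DIM('a) / 2 * ln ((B + 1)^2 * exp 1 * max (real DIM('a)) (real t) / DIM('a))"
    using curvature_volume_tradeoff[of "DIM('a)" t "B + 1"] assms(1) by (simp add: e_def)
  finally show ?thesis by simp
qed

end
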